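(* Let $N$ be a positive integer, $a,b,c\in\mathbb{R}$ with $a\neq0$, $W=[w_{ij}]\in\mathbb{R}^{N\times N}$ with $w_{ii}=0$ for all $i$, $\Delta=\mathrm{diag}(\delta_1,\dots,\delta_N)$ with $\delta_i\in\{0,1\}$, and $h>0$. Put $\Phi_s=e^{ah}I_N+\frac{c}{a}(e^{ah}-1)W$ and $\Psi_s=\frac{b}{a}(e^{ah}-1)\Delta$. If the continuous-time system $\dot X(t)=(aI_N+cW)X(t)+b\Delta U(t)$ is controllable, then the discrete-time system $X(k+1)=\Phi_sX(k)+\Psi_sU(k)$ is controllable.
   Context: The discrete system is the periodic sampling (period $h$, zero-order hold) of the continuous one. The continuous-time system is controllable in the usual sense (equivalently $\mathrm{rank}[sI_N-(aI_N+cW),\ b\Delta]=N$ for all $s\in\mathbb{C}$). The discrete-time system is called controllable if every initial state can be steered to the origin in finitely many steps. *)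

theory Defs
  imports "HOL-Analysis.Analysis"
begin

definition diag_mat :: "real ^ 'n \<Rightarrow> real ^ 'n ^ 'n" where
  "diag_mat d = (\<chi> i j. if i = j then d $ i else 0)"

definition ct_controllable :: "real ^ 'n ^ 'n \<Rightarrow> real ^ 'm ^ 'n \<Rightarrow> bool" where
  "ct_controllable A B \<longleftrightarrow>
     (\<forall>x0. \<exists>T u x. T \<ge> 0 \<and> continuous_on {0..T} u \<and>
        x 0 = x0 \<and> x T = 0 \<and>
        (\<forall>t\<in>{0..T}. (x has_vector_derivative (A *v x t + B *v u t)) (at t within {0..T})))"

fun dt_state :: "real ^ 'n ^ 'n \<Rightarrow> real ^ 'm ^ 'n \<Rightarrow> real ^ 'n \<Rightarrow> (nat \<Rightarrow> real ^ 'm) \<Rightarrow> nat \<Rightarrow> real ^ 'n" where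
  "dt_state Phi Psi x0 u 0 = x0"
| "dt_state Phi Psi x0 u (Suc k) = Phi *v dt_state Phi Psi x0 u k + Psi *v u k"

definition dt_controllable :: "real ^ 'n ^ 'n \<Rightarrow> real ^ 'm ^ 'n \<Rightarrow> bool" where
  "dt_controllable Phi Psi \<longleftrightarrow> (\<forall>x0. \<exists>k u. dt_state Phi Psi x0 u k = 0)"

end

theory Submission
  imports Defs
begin

text \<open>
  With \<open>\<kappa> = (e\<^sup>a\<^sup>h - 1) / a \<noteq> 0\<close> the sampled system is \<open>\<Phi> = I + \<kappa> A\<close>, \<open>\<Psi> = \<kappa> B\<close>
  for \<open>A = a I + c W\<close>, \<open>B = b \<Delta>\<close>. The states reachable from 0 by the discrete system
  form an increasing chain of subspaces whose union is invariant under \<open>\<Phi>\<close>, hence under \<open>A\<close>,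
  and contains the range of \<open>\<Psi>\<close>, hence of \<open>B\<close>. Such a subspace \<open>S\<close> must be the whole
  space: projecting along \<open>S\<close>, the transverse part of any continuous trajectory obeys an
  autonomous linear ODE, and by a Gronwall estimate it cannot reach 0 in finite time unless it
  starts at 0. By finite dimensionality some finite horizon already reaches every state, and
  linearity turns this into steering every state to the origin.
\<close>

lemma linear_ode_backward_unique:
  fixes z :: "real \<Rightarrow> 'a::real_inner" and L :: "'a \<Rightarrow> 'a"
  assumes L: "bounded_linear L" and "0 \<le> T"
    and z': "\<And>t. t \<in> {0..T} \<Longrightarrow> (z has_vector_derivative L (z t)) (at t within {0..T})"
    and "z T = 0"
  shows "z 0 = 0"
proof -
  obtain C where C: "\<And>x. norm (L x) \<le> norm x * C"
    using bounded_linear.pos_bounded[OF L] by blast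
  define g where "g t = exp (2 * C * t) * (z t \<bullet> z t)" for t
  have "continuous_on {0..T} z"
    using z' has_vector_derivative_continuous continuous_on_eq_continuous_within by blast
  then have "continuous_on {0..T} g"
    unfolding g_def by (intro continuous_intros)
  then have "g 0 \<le> g T"
  proof (rule DERIV_nonneg_imp_increasing_open[OF \<open>0 \<le> T\<close>, rotated])
    fix t assume t: "0 < t" "t < T"
    then have "(z has_vector_derivative L (z t)) (at t)"
      using z'[of t] at_within_Icc_at[of 0 t T] by simp
    then have "((\<lambda>t. z t \<bullet> z t) has_real_derivative 2 * (z t \<bullet> L (z t))) (at t)"
      using bounded_bilinear.has_vector_derivative[OF bounded_bilinear_inner]
      by (fastforce simp: has_real_derivative_iff_has_vector_derivative inner_commute)
    then have "(g has_real_derivative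
        exp (2 * C * t) * (2 * (C * (z t \<bullet> z t) + z t \<bullet> L (z t)))) (at t)"
      unfolding g_def by (auto intro!: derivative_eq_intros simp: algebra_simps)
    moreover have "\<bar>z t \<bullet> L (z t)\<bar> \<le> C * (z t \<bullet> z t)"
      using Cauchy_Schwarz_ineq2[of "z t" "L (z t)"] mult_left_mono[OF C[of "z t"], of "norm (z t)"]
      by (simp add: power2_norm_eq_inner[symmetric] power2_eq_square algebra_simps)
    ultimately show "\<exists>y. (g has_real_derivative y) (at t) \<and> 0 \<le> y"
      by force
  qed
  then have "z 0 \<bullet> z 0 \<le> 0"
    using \<open>z T = 0\<close> by (simp add: g_def)
  then show "z 0 = 0"
    by (metis inner_eq_zero_iff inner_ge_zero order_antisym)
qed

lemma linear_projection_along_subspace: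
  fixes S :: "'a::euclidean_space set"
  assumes "subspace S"
  obtains Q where "linear Q" and "\<And>s. s \<in> S \<Longrightarrow> Q s = 0" and "\<And>x. x - Q x \<in> S"
proof -
  obtain B where "pairwise orthogonal B" and "B \<subseteq> S" and span_B: "span B = S"
    using orthogonal_basis_subspace[OF assms] by metis
  define P where "P x = (\<Sum>b\<in>B. (b \<bullet> x / (b \<bullet> b)) *\<^sub>R b)" for x
  have "linear P"
    unfolding P_def linear_iff
    by (simp add: inner_add_right scaleR_sum_right add_divide_distrib scaleR_add_left sum.distrib)
  have P_in: "P x \<in> S" for x
    unfolding P_def using \<open>B \<subseteq> S\<close> assms
    by (auto intro!: subspace_sum subspace_scale)
  have "x - P x = 0" if "x \<in> S" for x
  proof -
    have "x - P x \<in> span B"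
      using that P_in assms subspace_diff span_B by blast
    then have "orthogonal (x - P x) (x - P x)"
      unfolding P_def by (rule Gram_Schmidt_step[OF \<open>pairwise orthogonal B\<close>])
    then show ?thesis
      by (simp only: orthogonal_self)
  qed
  moreover have "linear (\<lambda>x. x - P x)"
    using \<open>linear P\<close> by (simp add: linear_compose_sub linear_id[unfolded id_def])
  ultimately show thesis
    using that[of "\<lambda>x. x - P x"] P_in by simp
qed

lemma ct_controllable_invariant_subspace_eq_UNIV:
  fixes A :: "real ^ 'n ^ 'n" and B :: "real ^ 'm ^ 'n"
  assumes "ct_controllable A B" and "subspace S"
    and A_S: "\<And>x. x \<in> S \<Longrightarrow> A *v x \<in> S" and B_S: "\<And>v. B *v v \<in> S"
  shows "S = UNIV"
proof (rule ccontr)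
  assume "S \<noteq> UNIV"
  then obtain x0 where "x0 \<notin> S"
    by auto
  obtain Q where "linear Q" and Q_S: "\<And>s. s \<in> S \<Longrightarrow> Q s = 0" and QS: "\<And>y. y - Q y \<in> S"
    using linear_projection_along_subspace[OF \<open>subspace S\<close>] by blast
  from assms(1) obtain T u x where "0 \<le> T" "x 0 = x0" "x T = 0"
    and x': "\<And>t. t \<in> {0..T} \<Longrightarrow>
      (x has_vector_derivative A *v x t + B *v u t) (at t within {0..T})"
    unfolding ct_controllable_def by blast
  have Q_dynamics: "Q (A *v y + B *v v) = Q (A *v Q y)" for y v
  proof -
    have "A *v (y - Q y) + B *v v \<in> S"
      using A_S B_S QS subspace_add[OF \<open>subspace S\<close>] by blast
    have "Q (A *v y + B *v v) = Q (A *v Q y + (A *v (y - Q y) + B *v v))"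
      by (simp add: matrix_vector_mult_diff_distrib)
    also have "\<dots> = Q (A *v Q y)"
      using linear_add[OF \<open>linear Q\<close>] Q_S[OF \<open>A *v (y - Q y) + B *v v \<in> S\<close>] by simp
    finally show ?thesis .
  qed
  have "bounded_linear Q"
    using \<open>linear Q\<close> linear_conv_bounded_linear by blast
  have "Q (x 0) = 0"
  proof (rule linear_ode_backward_unique[OF _ \<open>0 \<le> T\<close>])
    show "bounded_linear (\<lambda>y. Q (A *v y))"
      using linear_compose[OF matrix_vector_mul_linear \<open>linear Q\<close>]
      by (simp add: o_def linear_conv_bounded_linear)
    show "((\<lambda>t. Q (x t)) has_vector_derivative Q (A *v Q (x t))) (at t within {0..T})"
      if "t \<in> {0..T}" for t
      using bounded_linear.has_vector_derivative[OF \<open>bounded_linear Q\<close> x'[OF that]] Q_dynamics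
      by simp
    show "Q (x T) = 0"
      using \<open>x T = 0\<close> linear_0[OF \<open>linear Q\<close>] by simp
  qed
  then show False
    using QS[of x0] \<open>x 0 = x0\<close> \<open>x0 \<notin> S\<close> by simp
qed

lemma dt_state_cong:
  "(\<And>j. j < k \<Longrightarrow> u j = v j) \<Longrightarrow> dt_state Phi Psi x u k = dt_state Phi Psi x v k"
  by (induction k) auto

lemma dt_state_Suc_shift:
  "dt_state Phi Psi x u (Suc k) = dt_state Phi Psi (Phi *v x + Psi *v u 0) (\<lambda>j. u (Suc j)) k"
  by (induction k) auto

lemma dt_state_add:
  "dt_state Phi Psi (x + y) (\<lambda>j. u j + v j) k = dt_state Phi Psi x u k + dt_state Phi Psi y v k"
  by (induction k) (auto simp: algebra_simps)

lemma dt_state_scaleR: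
  "dt_state Phi Psi (c *\<^sub>R x) (\<lambda>j. c *\<^sub>R u j) k = c *\<^sub>R dt_state Phi Psi x u k"
  by (induction k) (auto simp: algebra_simps)

definition dt_reachable :: "real ^ 'n ^ 'n \<Rightarrow> real ^ 'm ^ 'n \<Rightarrow> nat \<Rightarrow> (real ^ 'n) set" where
  "dt_reachable Phi Psi k = range (\<lambda>u. dt_state Phi Psi 0 u k)"

lemma dt_reachableI: "y = dt_state Phi Psi 0 u k \<Longrightarrow> y \<in> dt_reachable Phi Psi k"
  unfolding dt_reachable_def by blast

lemma subspace_dt_reachable: "subspace (dt_reachable Phi Psi k)"
  unfolding subspace_def
proof safe
  show "0 \<in> dt_reachable Phi Psi k"
    using dt_state_scaleR[of Phi Psi 0 0 "\<lambda>_. 0" k] by (intro dt_reachableI) simp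
next
  fix x y assume "x \<in> dt_reachable Phi Psi k" "y \<in> dt_reachable Phi Psi k"
  then obtain u v where "x = dt_state Phi Psi 0 u k" "y = dt_state Phi Psi 0 v k"
    unfolding dt_reachable_def by blast
  then show "x + y \<in> dt_reachable Phi Psi k"
    using dt_state_add[of Phi Psi 0 0 u v k]
    by (intro dt_reachableI[where u = "\<lambda>j. u j + v j"]) simp
next
  fix c x assume "x \<in> dt_reachable Phi Psi k"
  then obtain u where "x = dt_state Phi Psi 0 u k"
    unfolding dt_reachable_def by blast
  then show "c *\<^sub>R x \<in> dt_reachable Phi Psi k"
    using dt_state_scaleR[of Phi Psi c 0 u k]
    by (intro dt_reachableI[where u = "\<lambda>j. c *\<^sub>R u j"]) simp
qed

lemma mono_dt_reachable: "mono (dt_reachable Phi Psi)"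
  unfolding mono_iff_le_Suc
proof (intro allI subsetI)
  fix k y assume "y \<in> dt_reachable Phi Psi k"
  then obtain u where "y = dt_state Phi Psi 0 u k"
    unfolding dt_reachable_def by blast
  then have "y = dt_state Phi Psi 0 (case_nat 0 u) (Suc k)"
    by (simp only: dt_state_Suc_shift) simp
  then show "y \<in> dt_reachable Phi Psi (Suc k)"
    by (rule dt_reachableI)
qed

lemma dt_reachable_Phi:
  assumes "y \<in> dt_reachable Phi Psi k"
  shows "Phi *v y \<in> dt_reachable Phi Psi (Suc k)"
proof -
  obtain u where "y = dt_state Phi Psi 0 u k"
    using assms unfolding dt_reachable_def by blast
  also have "\<dots> = dt_state Phi Psi 0 (u(k := 0)) k"
    by (rule dt_state_cong) simp
  finally have "Phi *v y = dt_state Phi Psi 0 (u(k := 0)) (Suc k)"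
    by simp
  then show ?thesis
    by (rule dt_reachableI)
qed

lemma dt_reachable_Psi: "Psi *v v \<in> dt_reachable Phi Psi (Suc 0)"
  by (rule dt_reachableI[where u = "\<lambda>_. v"]) simp

lemma dt_controllable_if_dt_reachable_eq_UNIV:
  assumes "dt_reachable Phi Psi k = UNIV"
  shows "dt_controllable Phi Psi"
  unfolding dt_controllable_def
proof
  fix x0
  have "- dt_state Phi Psi x0 (\<lambda>_. 0) k \<in> dt_reachable Phi Psi k"
    using assms by simp
  then obtain u where u: "- dt_state Phi Psi x0 (\<lambda>_. 0) k = dt_state Phi Psi 0 u k"
    unfolding dt_reachable_def by blast
  have "dt_state Phi Psi x0 u k = dt_state Phi Psi x0 (\<lambda>_. 0) k + dt_state Phi Psi 0 u k"
    using dt_state_add[of Phi Psi x0 0 "\<lambda>_. 0" u k] by simp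
  then have "dt_state Phi Psi x0 u k = 0"
    by (simp flip: u)
  then show "\<exists>k u. dt_state Phi Psi x0 u k = 0"
    by blast
qed

lemma mono_subspace_chain_stabilizes:
  fixes R :: "nat \<Rightarrow> 'a::euclidean_space set"
  assumes "mono R" and "\<And>k. subspace (R k)"
  obtains K where "(\<Union>k. R k) = R K"
proof -
  obtain B where "B \<subseteq> (\<Union>k. R k)" "independent B" and span_B: "(\<Union>k. R k) \<subseteq> span B"
    using maximal_independent_subset by blast
  then have "\<forall>b\<in>B. \<exists>k. b \<in> R k"
    by blast
  then obtain f where f: "\<And>b. b \<in> B \<Longrightarrow> b \<in> R (f b)"
    by metis
  define K where "K = Max (f ` B)"
  have "finite B"
    using \<open>independent B\<close> independent_imp_finite by blast
  have "B \<subseteq> R K"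
  proof
    fix b assume "b \<in> B"
    then have "f b \<le> K"
      unfolding K_def using \<open>finite B\<close> by simp
    then show "b \<in> R K"
      using f[OF \<open>b \<in> B\<close>] monoD[OF \<open>mono R\<close>] by blast
  qed
  then have "(\<Union>k. R k) \<subseteq> R K"
    using span_B span_minimal[OF _ assms(2)] by blast
  then show thesis
    using that by blast
qed

lemma ct_controllable_imp_dt_controllable:
  fixes A :: "real ^ 'n ^ 'n" and B :: "real ^ 'm ^ 'n"
  assumes "ct_controllable A B" and "\<kappa> \<noteq> 0"
  shows "dt_controllable (mat 1 + \<kappa> *\<^sub>R A) (\<kappa> *\<^sub>R B)"
proof -
  let ?R = "dt_reachable (mat 1 + \<kappa> *\<^sub>R A) (\<kappa> *\<^sub>R B)"
  obtain K where K: "(\<Union>k. ?R k) = ?R K"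
    using mono_subspace_chain_stabilizes[OF mono_dt_reachable subspace_dt_reachable] by blast
  have "?R K = UNIV"
  proof (rule ct_controllable_invariant_subspace_eq_UNIV[OF assms(1) subspace_dt_reachable])
    fix x assume "x \<in> ?R K"
    then have "(mat 1 + \<kappa> *\<^sub>R A) *v x \<in> ?R K"
      using dt_reachable_Phi K by blast
    then have "(1 / \<kappa>) *\<^sub>R ((mat 1 + \<kappa> *\<^sub>R A) *v x - x) \<in> ?R K"
      using \<open>x \<in> ?R K\<close> by (intro subspace_scale subspace_diff subspace_dt_reachable)
    then show "A *v x \<in> ?R K"
      using \<open>\<kappa> \<noteq> 0\<close>
      by (simp add: matrix_vector_mult_add_rdistrib scaleR_matrix_vector_assoc[symmetric])
  next
    fix v
    have "(\<kappa> *\<^sub>R B) *v v \<in> ?R K"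
      using dt_reachable_Psi K by blast
    then have "(1 / \<kappa>) *\<^sub>R ((\<kappa> *\<^sub>R B) *v v) \<in> ?R K"
      by (intro subspace_scale subspace_dt_reachable)
    then show "B *v v \<in> ?R K"
      using \<open>\<kappa> \<noteq> 0\<close> by (simp add: scaleR_matrix_vector_assoc[symmetric])
  qed
  then show ?thesis
    by (rule dt_controllable_if_dt_reachable_eq_UNIV)
qed

theorem corollary9:
  fixes a b c h :: real and W :: "real ^ 'n ^ 'n" and \<delta> :: "real ^ 'n"
  assumes "a \<noteq> 0"
    and "\<forall>i. W $ i $ i = 0"
    and "\<forall>i. \<delta> $ i \<in> {0, 1}"
    and "h > 0"
    and "ct_controllable (a *\<^sub>R mat 1 + c *\<^sub>R W) (b *\<^sub>R diag_mat \<delta>)"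
  shows "dt_controllable
           (exp (a * h) *\<^sub>R mat 1 + ((c / a) * (exp (a * h) - 1)) *\<^sub>R W)
           (((b / a) * (exp (a * h) - 1)) *\<^sub>R diag_mat \<delta>)"
proof -
  define \<kappa> where "\<kappa> = (exp (a * h) - 1) / a"
  have "\<kappa> \<noteq> 0"
    using \<open>a \<noteq> 0\<close> \<open>h > 0\<close> by (simp add: \<kappa>_def)
  have Phi: "exp (a * h) *\<^sub>R mat 1 + ((c / a) * (exp (a * h) - 1)) *\<^sub>R W
      = mat 1 + \<kappa> *\<^sub>R (a *\<^sub>R mat 1 + c *\<^sub>R W)"
    using \<open>a \<noteq> 0\<close> by (simp add: \<kappa>_def vec_eq_iff mat_def field_simps)
  have Psi: "((b / a) * (exp (a * h) - 1)) *\<^sub>R diag_mat \<delta> = \<kappa> *\<^sub>R (b *\<^sub>R diag_mat \<delta>)"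
    by (simp add: \<kappa>_def)
  show ?thesis
    unfolding Phi Psi by (rule ct_controllable_imp_dt_controllable[OF assms(5) \<open>\<kappa> \<noteq> 0\<close>])
qed

end
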